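(* Let $p>1$, $N\ge m$, and $\lambda>0$ be fixed. For almost all $(A,y)\in\mathbb R^{m\times N}\times\mathbb R^m$, the unique optimal solution $x^*$ of $\min_{x\in\mathbb R^N}\frac12\|Ax-y\|_2^2+\lambda\|x\|_p^p$ satisfies $|\mathrm{supp}(x^* )|=N$.
   Context: $\|x\|_p:=(\sum_i|x_i|^p)^{1/p}$; $\mathrm{supp}(x)=\{i:x_i\ne0\}$. "For almost all" means outside a set of Lebesgue measure zero. *)

theory Defs
  imports "HOL-Analysis.Analysis"
begin

definition lp_norm :: "real \<Rightarrow> real ^ 'n \<Rightarrow> real" where
  "lp_norm p x = (\<Sum>i\<in>UNIV. \<bar>x $ i\<bar> powr p) powr (1 / p)"

definition supp :: "real ^ 'n \<Rightarrow> 'n set" where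
  "supp x = {i. x $ i \<noteq> 0}"

definition lp_obj :: "real \<Rightarrow> real \<Rightarrow> real ^ 'n ^ 'm \<Rightarrow> real ^ 'm \<Rightarrow> real ^ 'n \<Rightarrow> real" where
  "lp_obj p lam A y x = 1 / 2 * (norm (A *v x - y))\<^sup>2 + lam * (lp_norm p x) powr p"

definition is_opt :: "real \<Rightarrow> real \<Rightarrow> real ^ 'n ^ 'm \<Rightarrow> real ^ 'm \<Rightarrow> real ^ 'n \<Rightarrow> bool" where
  "is_opt p lam A y x \<longleftrightarrow> (\<forall>z. lp_obj p lam A y x \<le> lp_obj p lam A y z)"

end

theory Submission
  imports Defs
begin

text \<open>
  The objective is continuous and coercive, so it has a minimiser, and every minimiser satisfies
  the stationarity equations <a_j, y - A x> = lam p sgn(x_j) |x_j|^(p-1), where a_j is the j-th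
  column of A. The right-hand side is strictly increasing in x_j, so the stationarity system is
  strictly monotone and has at most one solution.

  If the minimiser has a zero entry x_i = 0, the residual r = y - A x satisfies <a_i, r> = 0.
  Conversely, once the zero set Z of x is known, the stationarity equations can be solved for x
  in terms of (A, r), and y = r + A x. So (A, y) lies in the image of the null set
  {(A, r). <a_i, r> = 0} under a map that is differentiable wherever <a_j, r> is nonzero for j
  outside Z. Differentiable images of null sets in the same dimension are null, and there are
  only finitely many choices of i and Z.
\<close>

definition sgn_powr :: "real \<Rightarrow> real \<Rightarrow> real" where
  "sgn_powr q t = sgn t * \<bar>t\<bar> powr q"

lemma sgn_powr_0 [simp]: "sgn_powr q 0 = 0"
  by (simp add: sgn_powr_def)

lemma sgn_powr_eq_0_iff [simp]: "sgn_powr q t = 0 \<longleftrightarrow> t = 0"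
  by (simp add: sgn_powr_def sgn_if)

lemma sgn_powr_strict_mono:
  assumes "q > 0"
  shows "strict_mono (sgn_powr q)"
proof (rule strict_monoI)
  fix s t :: real assume "s < t"
  consider "0 \<le> s" | "t \<le> 0" | "s < 0" "0 < t" by linarith
  then show "sgn_powr q s < sgn_powr q t"
  proof cases
    case 1
    then show ?thesis using \<open>s < t\<close> assms powr_less_mono2[of q s t] by (simp add: sgn_powr_def sgn_if)
  next
    case 2
    then show ?thesis using \<open>s < t\<close> assms powr_less_mono2[of q "-t" "-s"] by (simp add: sgn_powr_def sgn_if)
  next
    case 3
    then have "sgn_powr q s < 0" "0 < sgn_powr q t" by (simp_all add: sgn_powr_def)
    then show ?thesis by linarith
  qed
qed

lemma sgn_powr_inverse:
  assumes "q > 0"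
  shows "sgn_powr (1 / q) (sgn_powr q t) = t"
  using assms by (cases "t = 0") (simp_all add: sgn_powr_def abs_mult sgn_mult powr_powr sgn_mult_abs)

lemma differentiable_sgn_powr:
  assumes "t \<noteq> 0"
  shows "sgn_powr q differentiable (at t)"
proof (cases "t > 0")
  case True
  have "((\<lambda>s. s powr q) has_real_derivative q * t powr (q - 1)) (at t)"
    using True by (rule has_real_derivative_powr)
  then have "(sgn_powr q has_real_derivative q * t powr (q - 1)) (at t)"
    by (rule has_field_derivative_transform_within_open[where S="{0<..}"])
      (use True in \<open>auto simp: sgn_powr_def\<close>)
  then show ?thesis using real_differentiable_def by blast
next
  case False
  with assms have "t < 0" by simp
  have "((\<lambda>s. - ((- s) powr q)) has_real_derivative q * (- t) powr (q - 1)) (at t)"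
    using \<open>t < 0\<close> by (auto intro!: derivative_eq_intros)
  then have "(sgn_powr q has_real_derivative q * (- t) powr (q - 1)) (at t)"
    by (rule has_field_derivative_transform_within_open[where S="{..<0}"])
      (use \<open>t < 0\<close> in \<open>auto simp: sgn_powr_def\<close>)
  then show ?thesis using real_differentiable_def by blast
qed

lemma has_real_derivative_abs_powr:
  assumes "p > 1"
  shows "((\<lambda>s. \<bar>s\<bar> powr p) has_real_derivative p * sgn_powr (p - 1) t) (at t)"
proof -
  consider "t > 0" | "t < 0" | "t = 0" by linarith
  then show ?thesis
  proof cases
    case 1
    have "((\<lambda>s. s powr p) has_real_derivative p * sgn_powr (p - 1) t) (at t)"
      using has_real_derivative_powr[OF 1] 1 by (simp add: sgn_powr_def)
    then show ?thesis
      by (rule has_field_derivative_transform_within_open[where S="{0<..}"]) (use 1 in auto)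
  next
    case 2
    have "((\<lambda>s. (- s) powr p) has_real_derivative - (p * (- t) powr (p - 1))) (at t)"
      using 2 by (auto intro!: derivative_eq_intros)
    then have "((\<lambda>s. (- s) powr p) has_real_derivative p * sgn_powr (p - 1) t) (at t)"
      using 2 by (simp add: sgn_powr_def)
    then show ?thesis
      by (rule has_field_derivative_transform_within_open[where S="{..<0}"]) (use 2 in auto)
  next
    case 3
    have "((\<lambda>s. \<bar>s\<bar> powr (p - 1)) \<longlongrightarrow> 0) (at 0)"
      by (rule tendsto_zero_powrI) (auto intro!: tendsto_eq_intros simp: assms)
    then have "((\<lambda>s. (\<bar>s\<bar> powr p - \<bar>0\<bar> powr p) / (s - 0)) \<longlongrightarrow> 0) (at 0)"
    proof (rule Lim_null_comparison[rotated])
      have "norm ((\<bar>s\<bar> powr p - \<bar>0\<bar> powr p) / (s - 0)) \<le> \<bar>s\<bar> powr (p - 1)"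
        if "s \<noteq> 0" for s :: real
        using that assms by (simp add: powr_diff abs_divide)
      then show "\<forall>\<^sub>F s in at 0.
          norm ((\<bar>s\<bar> powr p - \<bar>0\<bar> powr p) / (s - 0)) \<le> \<bar>s\<bar> powr (p - 1)"
        by (auto simp: eventually_at_filter)
    qed
    then show ?thesis
      unfolding 3 has_field_derivative_iff by simp
  qed
qed

lemma lp_norm_powr:
  assumes "p > 0"
  shows "lp_norm p x powr p = (\<Sum>i\<in>UNIV. \<bar>x $ i\<bar> powr p)"
  using assms by (simp add: lp_norm_def powr_powr sum_nonneg)

lemma lp_obj_eq:
  assumes "p > 0"
  shows "lp_obj p lam A y x = 1 / 2 * (norm (A *v x - y))\<^sup>2 + lam * (\<Sum>i\<in>UNIV. \<bar>x $ i\<bar> powr p)"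
  using assms by (simp add: lp_obj_def lp_norm_powr)

lemma continuous_on_lp_obj:
  fixes A :: "real ^ 'n ^ 'm"
  assumes "p > 0"
  shows "continuous_on UNIV (lp_obj p lam A y)"
proof -
  have "continuous_on UNIV (\<lambda>x :: real ^ 'n. \<Sum>i\<in>UNIV. \<bar>x $ i\<bar> powr p)"
    by (intro continuous_on_sum continuous_on_powr') (auto intro!: continuous_intros simp: assms)
  moreover have "continuous_on UNIV (\<lambda>x. (norm (A *v x - y))\<^sup>2)"
    by (intro continuous_intros)
  ultimately show ?thesis
    unfolding lp_obj_eq[OF assms, abs_def] by (intro continuous_on_add continuous_on_mult_left)
qed

lemma continuous_bounded_sublevel_attains_min:
  fixes f :: "'a::heine_borel \<Rightarrow> real"
  assumes "continuous_on UNIV f" and "bounded {x. f x \<le> f a}"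
  shows "\<exists>x. \<forall>z. f x \<le> f z"
proof -
  let ?K = "{x. f x \<le> f a}"
  have "compact ?K"
    using assms closed_Collect_le[OF assms(1) continuous_on_const]
    by (simp add: compact_eq_bounded_closed)
  moreover have "a \<in> ?K" by simp
  ultimately obtain x where "x \<in> ?K" "\<forall>z\<in>?K. f x \<le> f z"
    using continuous_attains_inf[of ?K f] continuous_on_subset[OF assms(1)] by blast
  then have "f x \<le> f z" for z by (cases "z \<in> ?K") auto
  then show ?thesis by blast
qed

lemma bounded_sublevel_lp_obj:
  assumes "p > 0" and "lam > 0"
  shows "bounded {x. lp_obj p lam A y x \<le> c}"
proof -
  define B where "B = (c / lam) powr (1 / p)"
  have coord: "\<bar>x $ i\<bar> \<le> B" if "lp_obj p lam A y x \<le> c" for x i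
  proof -
    have "lam * \<bar>x $ i\<bar> powr p \<le> lam * (\<Sum>i\<in>UNIV. \<bar>x $ i\<bar> powr p)"
      using assms by (intro mult_left_mono member_le_sum) auto
    also have "\<dots> \<le> lp_obj p lam A y x"
      using assms by (simp add: lp_obj_eq)
    finally have "\<bar>x $ i\<bar> powr p \<le> c / lam"
      using that assms by (simp add: field_simps)
    then have "(\<bar>x $ i\<bar> powr p) powr (1 / p) \<le> B"
      unfolding B_def using assms by (intro powr_mono2) auto
    then show ?thesis
      using assms by (simp add: powr_powr)
  qed
  have "norm x \<le> CARD('a) * B" if "lp_obj p lam A y x \<le> c" for x :: "real ^ 'a"
  proof -
    have "norm x \<le> (\<Sum>i\<in>UNIV. \<bar>x $ i\<bar>)" by (rule norm_le_l1_cart)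
    also have "\<dots> \<le> (\<Sum>i\<in>(UNIV :: 'a set). B)" using coord[OF that] by (intro sum_mono)
    finally show ?thesis by simp
  qed
  then show ?thesis unfolding bounded_iff by blast
qed

lemma is_opt_exists:
  assumes "p > 0" and "lam > 0"
  shows "\<exists>x. is_opt p lam A y x"
  unfolding is_opt_def
  by (rule continuous_bounded_sublevel_attains_min[where a=0]
      continuous_on_lp_obj bounded_sublevel_lp_obj assms)+

definition stationary :: "real \<Rightarrow> real \<Rightarrow> real ^ 'n ^ 'm \<Rightarrow> real ^ 'm \<Rightarrow> real ^ 'n \<Rightarrow> bool" where
  "stationary p lam A y x \<longleftrightarrow>
     (\<forall>j. column j A \<bullet> (y - A *v x) = lam * p * sgn_powr (p - 1) (x $ j))"

lemma lp_obj_has_derivative_along_axis: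
  assumes "p > 1"
  shows "((\<lambda>t. lp_obj p lam A y (x + t *\<^sub>R axis j 1)) has_real_derivative
           lam * p * sgn_powr (p - 1) (x $ j) - column j A \<bullet> (y - A *v x)) (at 0)"
proof -
  let ?u = "A *v x - y" and ?c = "column j A"
  have residual: "A *v (x + t *\<^sub>R axis j 1) - y = ?u + t *\<^sub>R ?c" for t
    by (simp add: matrix_vector_right_distrib matrix_vector_mult_scaleR matrix_vector_mult_basis)
  have "1 / 2 * (norm (?u + t *\<^sub>R ?c))\<^sup>2
      = 1 / 2 * (?u \<bullet> ?u) + t * (?c \<bullet> ?u) + t\<^sup>2 / 2 * (?c \<bullet> ?c)" for t
    unfolding power2_norm_eq_inner
    by (simp add: inner_add_left inner_add_right inner_commute power2_eq_square algebra_simps)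
  then have fit: "((\<lambda>t. 1 / 2 * (norm (?u + t *\<^sub>R ?c))\<^sup>2) has_real_derivative ?c \<bullet> ?u) (at 0)"
    by (auto intro!: derivative_eq_intros)
  have coord: "((\<lambda>t. \<bar>(x + t *\<^sub>R axis j 1) $ i\<bar> powr p) has_real_derivative
      p * sgn_powr (p - 1) (x $ i) * axis j 1 $ i) (at 0)" for i
  proof -
    have "((\<lambda>t. x $ i + t * axis j 1 $ i) has_real_derivative axis j 1 $ i) (at 0)"
      by (auto intro!: derivative_eq_intros)
    from DERIV_chain2[OF has_real_derivative_abs_powr[OF assms] this] show ?thesis
      by simp
  qed
  have penalty: "((\<lambda>t. \<Sum>i\<in>UNIV. \<bar>(x + t *\<^sub>R axis j 1) $ i\<bar> powr p) has_real_derivative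
      p * sgn_powr (p - 1) (x $ j)) (at 0)"
  proof -
    have "((\<lambda>t. \<Sum>i\<in>UNIV. \<bar>(x + t *\<^sub>R axis j 1) $ i\<bar> powr p) has_real_derivative
        (\<Sum>i\<in>UNIV. p * sgn_powr (p - 1) (x $ i) * axis j 1 $ i)) (at 0)"
      by (rule DERIV_sum) (rule coord)
    then show ?thesis by (simp add: axis_def if_distrib cong: if_cong)
  qed
  show ?thesis
    unfolding lp_obj_eq[OF order.strict_trans[OF zero_less_one assms]] residual
    using DERIV_add[OF fit DERIV_cmult[OF penalty, of lam]]
    by (simp add: algebra_simps inner_diff_right)
qed

lemma is_opt_imp_stationary:
  assumes "p > 1" and "is_opt p lam A y x"
  shows "stationary p lam A y x"
  unfolding stationary_def
proof
  fix j
  have "lam * p * sgn_powr (p - 1) (x $ j) - column j A \<bullet> (y - A *v x) = 0"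
    by (rule DERIV_local_min[OF lp_obj_has_derivative_along_axis[OF assms(1)] zero_less_one])
      (use assms(2) in \<open>simp add: is_opt_def\<close>)
  then show "column j A \<bullet> (y - A *v x) = lam * p * sgn_powr (p - 1) (x $ j)"
    by simp
qed

lemma inner_matrix_vector_mult_eq_sum_column:
  fixes A :: "real ^ 'n ^ 'm"
  shows "(A *v u) \<bullet> v = (\<Sum>j\<in>UNIV. u $ j * (column j A \<bullet> v))"
  by (simp add: matrix_mult_sum scalar_mult_eq_scaleR inner_sum_left)

lemma strict_mono_diff_mult_pos:
  fixes g :: "real \<Rightarrow> real"
  assumes "strict_mono g" and "a \<noteq> b"
  shows "0 < (a - b) * (g a - g b)"
  using assms by (cases "a < b") (auto simp: strict_mono_less mult_pos_pos mult_neg_neg)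

lemma stationary_unique:
  fixes A :: "real ^ 'n ^ 'm"
  assumes "p > 1" and "lam > 0"
    and x: "stationary p lam A y x" and z: "stationary p lam A y z"
  shows "x = z"
proof -
  let ?g = "\<lambda>t. lam * p * sgn_powr (p - 1) t"
  have mono: "strict_mono ?g"
    using assms sgn_powr_strict_mono[of "p - 1"] by (simp add: strict_mono_def)
  let ?T = "\<lambda>j. (x $ j - z $ j) * (?g (x $ j) - ?g (z $ j))"
  have gx: "?g (x $ j) = column j A \<bullet> (y - A *v x)"
    and gz: "?g (z $ j) = column j A \<bullet> (y - A *v z)" for j
    using x z by (simp_all add: stationary_def)
  have "(\<Sum>j\<in>UNIV. ?T j) = (\<Sum>j\<in>UNIV. (x - z) $ j * (column j A \<bullet> (A *v z - A *v x)))"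
    by (simp add: gx gz inner_diff_right)
  also have "\<dots> = (A *v (x - z)) \<bullet> (A *v z - A *v x)"
    by (rule inner_matrix_vector_mult_eq_sum_column[symmetric])
  also have "\<dots> = - (norm (A *v (x - z)))\<^sup>2"
    by (simp add: power2_norm_eq_inner matrix_vector_mult_diff_distrib inner_diff_right)
  finally have "(\<Sum>j\<in>UNIV. ?T j) \<le> 0" by simp
  moreover have nonneg: "0 \<le> ?T j" for j
    using strict_mono_diff_mult_pos[OF mono, of "x $ j" "z $ j"] by (cases "x $ j = z $ j") auto
  ultimately have "?T j = 0" for j
    using sum_nonneg_eq_0_iff[of UNIV ?T] by (simp add: antisym sum_nonneg)
  then show ?thesis
    using strict_mono_diff_mult_pos[OF mono] by (metis less_irrefl vec_eq_iff)
qed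

definition correlation :: "(real ^ 'n ^ 'm) \<times> (real ^ 'm) \<Rightarrow> 'n \<Rightarrow> real" where
  "correlation w j = column j (fst w) \<bullet> snd w"

lemma bounded_linear_column: "bounded_linear (column j :: real ^ 'n ^ 'm \<Rightarrow> real ^ 'm)"
  unfolding linear_conv_bounded_linear[symmetric]
  by (auto simp: linear_iff column_def vec_eq_iff)

lemma differentiable_column_fst:
  "(\<lambda>w :: (real ^ 'n ^ 'm) \<times> 'a::real_normed_vector. column j (fst w)) differentiable F"
  by (rule bounded_linear_imp_differentiable bounded_linear_compose[OF bounded_linear_column]
      bounded_linear_fst)+

lemma differentiable_correlation:
  "(\<lambda>w. correlation w j) differentiable (at w within S)"
  unfolding correlation_def
  by (rule differentiable_inner differentiable_column_fst
      bounded_linear_imp_differentiable[OF bounded_linear_snd])+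

lemma negligible_correlation_eq_0:
  "negligible {w :: (real ^ 'n ^ 'm) \<times> (real ^ 'm). correlation w i = 0}"
proof -
  txt \<open>Where r_k is nonzero the equation is solved for the entry A_ki: the set is the image of
    the hyperplane A_ki = 0 under the shear \<Psi> along the direction E of that entry.\<close>
  obtain k :: 'm where True by blast
  define E :: "(real ^ 'n ^ 'm) \<times> (real ^ 'm)" where "E = (axis k (axis i 1), 0)"
  have snd_E: "snd E = 0"
    by (simp add: E_def)
  have shift: "correlation (w + t *\<^sub>R E) i = correlation w i + t * snd w $ k" for w t
  proof -
    have "column i (fst (w + t *\<^sub>R E)) = column i (fst w) + t *\<^sub>R axis k 1"
      by (simp add: E_def column_def axis_def vec_eq_iff)
    then show ?thesis
      by (simp add: correlation_def E_def inner_add_left inner_axis')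
  qed
  define \<Psi> where "\<Psi> w = w - (correlation w i / snd w $ k) *\<^sub>R E" for w
  let ?V = "{w. snd w $ k \<noteq> 0}" and ?H = "{w. E \<bullet> w = 0}"
  have "negligible {w :: (real ^ 'n ^ 'm) \<times> (real ^ 'm). (0, axis k 1) \<bullet> w = 0}"
    by (rule negligible_hyperplane) (simp add: zero_prod_def)
  moreover have "(0, axis k 1) \<bullet> w = snd w $ k" for w :: "(real ^ 'n ^ 'm) \<times> (real ^ 'm)"
    by (cases w) (simp add: inner_axis')
  ultimately have "negligible {w :: (real ^ 'n ^ 'm) \<times> (real ^ 'm). snd w $ k = 0}"
    by simp
  moreover have "negligible (\<Psi> ` (?H \<inter> ?V))"
  proof (rule negligible_differentiable_image_negligible[OF order_refl])
    show "negligible (?H \<inter> ?V)"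
      by (rule negligible_subset[OF negligible_hyperplane[of E 0]]) (auto simp: E_def zero_prod_def)
    show "\<Psi> differentiable_on ?H \<inter> ?V"
      unfolding \<Psi>_def differentiable_on_def
      by (auto intro!: derivative_intros differentiable_correlation
          bounded_linear_imp_differentiable[OF
            bounded_linear_compose[OF bounded_linear_vec_nth bounded_linear_snd]])
  qed
  moreover have "{w. correlation w i = 0} \<subseteq> {w. snd w $ k = 0} \<union> \<Psi> ` (?H \<inter> ?V)"
  proof
    fix w :: "(real ^ 'n ^ 'm) \<times> (real ^ 'm)"
    assume w: "w \<in> {w. correlation w i = 0}"
    define a where "a = fst w $ k $ i"
    have "E \<bullet> w = a"
      by (cases w) (simp add: E_def a_def inner_axis')
    then have H: "w - a *\<^sub>R E \<in> ?H"
      by (simp add: inner_diff_right E_def)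
    show "w \<in> {w. snd w $ k = 0} \<union> \<Psi> ` (?H \<inter> ?V)"
    proof (cases "snd w $ k = 0")
      case False
      have snd: "snd (w - a *\<^sub>R E) = snd w"
        by (simp add: snd_E)
      moreover have "correlation (w - a *\<^sub>R E) i = - a * snd w $ k"
        using w shift[of w "- a"] by simp
      ultimately have "\<Psi> (w - a *\<^sub>R E) = w"
        using False by (simp add: \<Psi>_def snd_E)
      then show ?thesis
        using H False snd by (auto intro!: image_eqI[where x="w - a *\<^sub>R E"])
    qed simp
  qed
  ultimately show ?thesis
    by (meson negligible_Un negligible_subset)
qed

text \<open>Recovers the data (A, y) from w = (A, r), r = y - A x, by inverting the stationarity
  equations for the entries of x outside its zero set Z.\<close>
definition data_of_residual ::
  "real \<Rightarrow> real \<Rightarrow> 'n set \<Rightarrow> (real ^ 'n ^ 'm) \<times> (real ^ 'm) \<Rightarrow> (real ^ 'n ^ 'm) \<times> (real ^ 'm)"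
where
  "data_of_residual p lam Z w =
     (fst w, snd w + (\<Sum>j\<in>- Z. sgn_powr (1 / (p - 1)) (correlation w j / (lam * p))
                                  *\<^sub>R column j (fst w)))"

definition exceptional_set :: "real \<Rightarrow> real \<Rightarrow> ((real ^ 'n ^ 'm) \<times> (real ^ 'm)) set" where
  "exceptional_set p lam =
     (\<Union>Z\<in>{Z. Z \<noteq> {}}. data_of_residual p lam Z ` {w. \<forall>j. correlation w j = 0 \<longleftrightarrow> j \<in> Z})"

lemma negligible_exceptional_set:
  assumes "lam * p \<noteq> 0"
  shows "negligible (exceptional_set p lam :: ((real ^ 'n ^ 'm) \<times> (real ^ 'm)) set)"
proof -
  have "negligible (data_of_residual p lam Z `
      {w :: (real ^ 'n ^ 'm) \<times> (real ^ 'm). \<forall>j. correlation w j = 0 \<longleftrightarrow> j \<in> Z})"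
    (is "negligible (_ ` ?S)") if "i \<in> Z" for Z i
  proof (rule negligible_differentiable_image_negligible[OF order_refl])
    show "negligible ?S"
      by (rule negligible_subset[OF negligible_correlation_eq_0[of i]]) (use that in auto)
    have "(\<lambda>w. sgn_powr (1 / (p - 1)) (correlation w j / (lam * p))) differentiable (at w within ?S)"
      if "w \<in> ?S" "j \<in> - Z" for w j
    proof -
      have "(\<lambda>w. correlation w j / (lam * p)) differentiable (at w within ?S)"
        using assms by (intro differentiable_divide differentiable_correlation differentiable_const) auto
      moreover have "sgn_powr (1 / (p - 1)) differentiable (at (correlation w j / (lam * p)))"
        using that assms by (intro differentiable_sgn_powr) auto
      ultimately show ?thesis
        using differentiable_chain_within differentiable_at_withinI by (fastforce simp: o_def)
    qed
    then show "data_of_residual p lam Z differentiable_on ?S"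
      unfolding differentiable_on_def data_of_residual_def
      by (auto intro!: differentiable_Pair differentiable_add differentiable_sum differentiable_scaleR
          differentiable_column_fst bounded_linear_imp_differentiable[OF bounded_linear_fst]
          bounded_linear_imp_differentiable[OF bounded_linear_snd])
  qed
  then show ?thesis
    unfolding exceptional_set_def by (intro negligible_Union) auto
qed

lemma stationary_in_exceptional_set:
  fixes A :: "real ^ 'n ^ 'm"
  assumes "p > 1" and "lam > 0" and "stationary p lam A y x" and "x $ i = 0"
  shows "(A, y) \<in> exceptional_set p lam"
proof -
  let ?Z = "{j. x $ j = 0}" and ?w = "(A, y - A *v x)"
  have corr: "correlation ?w j = lam * p * sgn_powr (p - 1) (x $ j)" for j
    using assms(3) by (simp add: correlation_def stationary_def)
  then have "\<forall>j. correlation ?w j = 0 \<longleftrightarrow> j \<in> ?Z"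
    using assms(1,2) by simp
  moreover have "data_of_residual p lam ?Z ?w = (A, y)"
  proof -
    have "sgn_powr (1 / (p - 1)) (correlation ?w j / (lam * p)) = x $ j" for j
      using corr sgn_powr_inverse[of "p - 1"] assms(1,2) by simp
    then have "(\<Sum>j\<in>- ?Z. sgn_powr (1 / (p - 1)) (correlation ?w j / (lam * p)) *\<^sub>R column j A)
        = (\<Sum>j\<in>- ?Z. x $ j *\<^sub>R column j A)"
      by simp
    also have "\<dots> = (\<Sum>j\<in>UNIV. x $ j *\<^sub>R column j A)"
      by (rule sum.mono_neutral_left) auto
    also have "\<dots> = A *v x"
      by (simp add: matrix_mult_sum scalar_mult_eq_scaleR)
    finally show ?thesis
      by (simp add: data_of_residual_def)
  qed
  moreover have "?Z \<noteq> {}"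
    using assms(4) by auto
  ultimately show ?thesis
    unfolding exceptional_set_def
    by (intro UN_I[where a="?Z"] image_eqI[where x="?w"]) auto
qed

lemma unique_opt_full_support:
  fixes A :: "real ^ 'n ^ 'm"
  assumes "p > 1" and "lam > 0" and "(A, y) \<notin> exceptional_set p lam"
  shows "\<exists>x. is_opt p lam A y x \<and> (\<forall>z. is_opt p lam A y z \<longrightarrow> z = x) \<and> card (supp x) = CARD('n)"
proof -
  have "p > 0"
    using assms(1) by simp
  then obtain x where x: "is_opt p lam A y x"
    using is_opt_exists assms(2) by blast
  have stat: "stationary p lam A y x"
    by (rule is_opt_imp_stationary[OF assms(1) x])
  have "\<forall>z. is_opt p lam A y z \<longrightarrow> z = x"
    using stationary_unique[OF assms(1,2) is_opt_imp_stationary[OF assms(1)] stat] by blast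
  moreover have "card (supp x) = CARD('n)"
  proof -
    have "x $ i \<noteq> 0" for i
      using stationary_in_exceptional_set[OF assms(1,2) stat, of i] assms(3) by blast
    then show ?thesis
      by (simp add: supp_def)
  qed
  ultimately show ?thesis
    using x by blast
qed

theorem theorem4p2:
  fixes p lam :: real
  assumes "p > 1" and "CARD('m::finite) \<le> CARD('n::finite)" and "lam > 0"
  shows "AE Ay in (lborel :: ((real ^ 'n ^ 'm) \<times> (real ^ 'm)) measure).
           \<exists>x. is_opt p lam (fst Ay) (snd Ay) x
             \<and> (\<forall>z. is_opt p lam (fst Ay) (snd Ay) z \<longrightarrow> z = x)
             \<and> card (supp x) = CARD('n)"
proof -
  let ?N = "exceptional_set p lam :: ((real ^ 'n ^ 'm) \<times> (real ^ 'm)) set"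
  have "negligible ?N"
    by (rule negligible_exceptional_set) (use assms in simp)
  then have "AE Ay in lebesgue. Ay \<notin> ?N"
    by (simp add: negligible_iff_null_sets AE_not_in)
  then have "AE Ay in lborel. Ay \<notin> ?N"
    by (simp add: AE_completion_iff)
  then show ?thesis
  proof eventually_elim
    case (elim Ay)
    then show ?case
      using unique_opt_full_support[OF assms(1,3), of "fst Ay" "snd Ay"] by simp
  qed
qed

end
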